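(* Let $n\ge 1$ and let $L=(l_{ij})$ be a real symmetric $n\times n$ matrix satisfying $l_{ii}=-\sum_{j\neq i} l_{ij}$ for $i=1,\dots,n$. Let $G$ be the weighted undirected graph with vertex set $\{1,\dots,n\}$ having an edge $\{i,j\}$ of weight $l_{ij}$ whenever $i\neq j$ and $l_{ij}\neq 0$ (and no other edges); $G$ may be disconnected. Let $G_+$ (resp. $G_-$) be the subgraph of $G$ with the same vertex set $\{1,\dots,n\}$ and only the edges of positive (resp. negative) weight. For a graph $H$ let $c(H)$ denote its number of connected components, and let $n_+(L)$, $n_-(L)$, $n_0(L)$ denote the numbers of positive, negative and zero eigenvalues of $L$, counted with multiplicity. Then \[ c(G_+)-c(G)\le n_+(L)\le n-c(G_-),\qquad c(G_-)-c(G)\le n_-(L)\le n-c(G_+), \] \[ c(G)\le n_0(L)\le n+2c(G)-c(G_+)-c(G_-). \]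
   Context: The matrix $L$ is what the paper calls a (weighted) Laplacian matrix of the graph $G$: the edge weights are the off-diagonal entries of $L$ and the diagonal entries are minus the row sums of the off-diagonal entries. Isolated vertices count as connected components. *)

theory Defs
  imports "Jordan_Normal_Form.Char_Poly"
begin

text \<open>Graphs on the vertex set {0..<n} (0-based indexing of {1..n}) given by an
  edge predicate E; connected components via reflexive-transitive closure of the
  edge relation restricted to the vertex set. Isolated vertices are components.\<close>

definition reach :: "nat \<Rightarrow> (nat \<Rightarrow> nat \<Rightarrow> bool) \<Rightarrow> (nat \<times> nat) set" where
  "reach n E = (Restr {(i,j). E i j} {0..<n})\<^sup>* \<inter> ({0..<n} \<times> {0..<n})"

definition num_components :: "nat \<Rightarrow> (nat \<Rightarrow> nat \<Rightarrow> bool) \<Rightarrow> nat" where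
  "num_components n E = card ({0..<n} // reach n E)"

definition graph_G :: "real mat \<Rightarrow> nat \<Rightarrow> nat \<Rightarrow> bool" where
  "graph_G L i j \<longleftrightarrow> i \<noteq> j \<and> L $$ (i,j) \<noteq> 0"

definition graph_Gpos :: "real mat \<Rightarrow> nat \<Rightarrow> nat \<Rightarrow> bool" where
  "graph_Gpos L i j \<longleftrightarrow> i \<noteq> j \<and> L $$ (i,j) > 0"

definition graph_Gneg :: "real mat \<Rightarrow> nat \<Rightarrow> nat \<Rightarrow> bool" where
  "graph_Gneg L i j \<longleftrightarrow> i \<noteq> j \<and> L $$ (i,j) < 0"

definition n_pos :: "real mat \<Rightarrow> nat" where
  "n_pos L = (\<Sum>x\<in>{x. x > 0 \<and> poly (char_poly L) x = 0}. order x (char_poly L))"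

definition n_neg :: "real mat \<Rightarrow> nat" where
  "n_neg L = (\<Sum>x\<in>{x. x < 0 \<and> poly (char_poly L) x = 0}. order x (char_poly L))"

definition n_zero :: "real mat \<Rightarrow> nat" where
  "n_zero L = order 0 (char_poly L)"

end

(*
  Diagonalise L = U diag(e_1, ..., e_n) U^T with U orthogonal.  Since the rows of L sum to zero,
  x^T L x = (E_-(x) - E_+(x)) / 2, where E_+ and E_- are the Dirichlet energies of x on G_+ and G_-
  with the weights |l_ij|.  Vectors constant on the components of a graph H form a space of
  dimension c(H), so c(H) is at most the number of linear forms that separate the points of this
  space.
  On vectors constant on the components of G_- the form is <= 0, so no nonzero such vector is
  orthogonal to all eigenvectors with e_i <= 0: c(G_-) <= n - n_+.  A vector constant on the
  components of G_+ with x^T L x <= 0 has E_- = 0, hence is constant on the components of G and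
  is determined by its values at one vertex per component: c(G_+) <= n_+ + c(G).  Vectors constant
  on the components of G lie in the kernel: c(G) <= n_0.  Applying this to -L exchanges G_+ with
  G_- and n_+ with n_-, and n_+ + n_- + n_0 = n gives the upper bound on n_0.
*)

theory Submission
  imports Defs "Jordan_Normal_Form.Schur_Decomposition"
begin

lemma mat_kernel_nontrivial:
  fixes M :: "'a :: field mat"
  assumes M: "M \<in> carrier_mat m k" and mk: "m < k"
  obtains y where "y \<in> carrier_vec k" "y \<noteq> 0\<^sub>v k" "M *\<^sub>v y = 0\<^sub>v m"
proof -
  \<comment> \<open>Pad \<open>M\<close> with zero rows to a singular square matrix.\<close>
  define c where "c i = (if i < m then row M i else 0\<^sub>v k)" for i
  define A where "A = mat\<^sub>r k k (\<lambda>i. if i = k - 1 then 0\<^sub>v k else c i)"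
  have A: "A \<in> carrier_mat k k" unfolding A_def by auto
  have "det A = 0" unfolding A_def
    by (rule det_row_0) (use mk M in \<open>auto simp: c_def\<close>)
  then obtain y where y: "y \<in> carrier_vec k" "y \<noteq> 0\<^sub>v k" "A *\<^sub>v y = 0\<^sub>v k"
    using det_0_iff_vec_prod_zero_field[OF A] by auto
  have "M *\<^sub>v y = 0\<^sub>v m"
  proof (rule eq_vecI)
    fix i assume "i < dim_vec (0\<^sub>v m :: 'a vec)"
    hence i: "i < m" by simp
    have "(A *\<^sub>v y) $ i = row M i \<bullet> y" using i mk M unfolding A_def c_def by auto
    thus "(M *\<^sub>v y) $ i = 0\<^sub>v m $ i" using y(3) i mk M by auto
  qed (use M in auto)
  with y that show ?thesis by blast
qed

lemma dim_le_length_separating_forms: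
  fixes B :: "'a :: field mat"
  assumes B: "B \<in> carrier_mat n k" and gs: "set gs \<subseteq> carrier_vec n"
    and separating: "\<And>y. y \<in> carrier_vec k \<Longrightarrow> \<forall>g\<in>set gs. g \<bullet> (B *\<^sub>v y) = 0 \<Longrightarrow> y = 0\<^sub>v k"
  shows "k \<le> length gs"
proof (rule ccontr)
  assume "\<not> k \<le> length gs"
  define F where "F = mat_of_rows n gs"
  have F: "F \<in> carrier_mat (length gs) n" unfolding F_def by auto
  obtain y where y: "y \<in> carrier_vec k" "y \<noteq> 0\<^sub>v k" "(F * B) *\<^sub>v y = 0\<^sub>v (length gs)"
    using mat_kernel_nontrivial[OF mult_carrier_mat[OF F B]] \<open>\<not> k \<le> length gs\<close> by force
  have "g \<bullet> (B *\<^sub>v y) = 0" if "g \<in> set gs" for g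
  proof -
    obtain a where a: "a < length gs" "g = gs ! a" using \<open>g \<in> set gs\<close> by (auto simp: in_set_conv_nth)
    have "row F a = g" unfolding F_def using a gs by (metis mat_of_rows_row nth_mem subsetD)
    hence "(F *\<^sub>v (B *\<^sub>v y)) $ a = g \<bullet> (B *\<^sub>v y)" using a F by simp
    moreover have "F *\<^sub>v (B *\<^sub>v y) = 0\<^sub>v (length gs)" using F B y by auto
    ultimately show ?thesis using a by simp
  qed
  with separating[OF y(1)] y(2) show False by blast
qed

lemma mat_diag_mult_vec:
  fixes f :: "nat \<Rightarrow> 'a :: semiring_0"
  assumes "v \<in> carrier_vec n"
  shows "mat_diag n f *\<^sub>v v = vec n (\<lambda>i. f i * v $ i)"
  using assms
  by (intro eq_vecI) (auto simp: mat_diag_def scalar_prod_def if_distrib[of "\<lambda>a. a * _"] sum.delta cong: if_cong)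

lemma mult_block_diag_mat:
  assumes "A1 \<in> carrier_mat n1 n1" "A2 \<in> carrier_mat n1 n1"
    and "D1 \<in> carrier_mat n2 n2" "D2 \<in> carrier_mat n2 n2"
  shows "four_block_mat A1 (0\<^sub>m n1 n2) (0\<^sub>m n2 n1) D1 * four_block_mat A2 (0\<^sub>m n1 n2) (0\<^sub>m n2 n1) D2
    = four_block_mat (A1 * A2) (0\<^sub>m n1 n2) (0\<^sub>m n2 n1) (D1 * D2)"
  using assms by (subst mult_four_block_mat[OF assms(1) _ _ assms(3) assms(2) _ _ assms(4)]) auto

section \<open>The spectral theorem for real symmetric matrices\<close>

lemma real_symmetric_eigenvalue_real:
  fixes A :: "real mat"
  assumes A: "A \<in> carrier_mat n n" and sym: "transpose_mat A = A"
    and ev: "eigenvalue (map_mat complex_of_real A) l"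
  shows "l \<in> \<real>"
proof -
  define Ac where "Ac = map_mat complex_of_real A"
  have Ac: "Ac \<in> carrier_mat n n" and symAc: "transpose_mat Ac = Ac"
    unfolding Ac_def using A sym by (auto simp: map_mat_transpose)
  obtain v where v: "v \<in> carrier_vec n" "v \<noteq> 0\<^sub>v n" "Ac *\<^sub>v v = l \<cdot>\<^sub>v v"
    using ev Ac unfolding Ac_def eigenvalue_def eigenvector_def by auto
  have real_rows: "conjugate (row Ac i) = row Ac i" if "i < n" for i
    using that A unfolding Ac_def by (intro eq_vecI) auto
  have conj_Av: "conjugate (Ac *\<^sub>v v) = Ac *\<^sub>v conjugate v"
  proof (rule eq_vecI)
    fix i assume "i < dim_vec (Ac *\<^sub>v conjugate v)"
    hence i: "i < n" using Ac by simp
    have "conjugate (row Ac i \<bullet> v) = conjugate (row Ac i) \<bullet> conjugate v"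
      using Ac v(1) i by (intro conjugate_sprod_vec) auto
    thus "conjugate (Ac *\<^sub>v v) $ i = (Ac *\<^sub>v conjugate v) $ i"
      using Ac i real_rows[OF i] by simp
  qed (use Ac in simp)
  have "l * (v \<bullet>c v) = (Ac *\<^sub>v v) \<bullet>c v"
    using v by (simp add: smult_scalar_prod_distrib[of _ n])
  also have "\<dots> = v \<bullet>c (Ac *\<^sub>v v)"
    using transpose_vec_mult_scalar[OF Ac carrier_vec_conjugate[OF v(1)] v(1)] conj_Av symAc
    by simp
  also have "\<dots> = cnj l * (v \<bullet>c v)"
    using v by (simp add: conjugate_smult_vec scalar_prod_smult_distrib[of _ n])
  finally have "l = cnj l" using v by simp
  thus ?thesis by (simp add: Reals_cnj_iff)
qed

lemma real_symmetric_has_eigenvalue: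
  fixes A :: "real mat"
  assumes A: "A \<in> carrier_mat n n" and sym: "transpose_mat A = A" and n: "n > 0"
  obtains e where "eigenvalue A e"
proof -
  define Ac where "Ac = map_mat complex_of_real A"
  have Ac: "Ac \<in> carrier_mat n n" unfolding Ac_def using A by auto
  obtain ls where ls: "char_poly Ac = (\<Prod>a\<leftarrow>ls. [:- a, 1:])" "length ls = n"
    using char_poly_factorized[OF Ac] by auto
  have "poly (char_poly Ac) (ls ! 0) = 0"
    unfolding ls(1) using n ls(2) by (intro linear_poly_root) simp
  hence "eigenvalue Ac (ls ! 0)" using eigenvalue_root_char_poly[OF Ac] by simp
  hence "ls ! 0 \<in> \<real>" using real_symmetric_eigenvalue_real[OF A sym] unfolding Ac_def by simp
  then obtain e where e: "ls ! 0 = complex_of_real e" by (auto elim: Reals_cases)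
  have "char_poly Ac = map_poly complex_of_real (char_poly A)"
    unfolding Ac_def by (rule of_real_hom.char_poly_hom[OF A])
  hence "poly (char_poly A) e = 0"
    using \<open>poly (char_poly Ac) (ls ! 0) = 0\<close> e by simp
  thus ?thesis using that eigenvalue_root_char_poly[OF A] by blast
qed

lemma orthogonal_mat_of_normalized_cols:
  fixes ws :: "real vec list"
  assumes ws: "set ws \<subseteq> carrier_vec n" "corthogonal ws" "length ws = n"
  defines "W \<equiv> mat_of_cols n (map (\<lambda>w. (1 / sqrt (w \<bullet> w)) \<cdot>\<^sub>v w) ws)"
  shows "W \<in> carrier_mat n n" "transpose_mat W * W = 1\<^sub>m n"
proof -
  show W: "W \<in> carrier_mat n n" unfolding W_def using ws by auto
  have col_W: "col W i = (1 / sqrt (ws ! i \<bullet> ws ! i)) \<cdot>\<^sub>v ws ! i" if "i < n" for i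
    unfolding W_def using ws that by (subst col_mat_of_cols) auto
  have orth: "ws ! i \<bullet> ws ! j = 0 \<longleftrightarrow> i \<noteq> j" if "i < n" "j < n" for i j
    using ws that unfolding corthogonal_def by auto
  show "transpose_mat W * W = 1\<^sub>m n"
  proof (rule eq_matI)
    fix i j assume "i < dim_row (1\<^sub>m n :: real mat)" "j < dim_col (1\<^sub>m n :: real mat)"
    hence i: "i < n" and j: "j < n" by auto
    have wi: "ws ! i \<in> carrier_vec n" "ws ! j \<in> carrier_vec n" using ws i j by auto
    have "(transpose_mat W * W) $$ (i,j) = col W i \<bullet> col W j" using W i j by auto
    also have "\<dots> = (ws ! i \<bullet> ws ! j) / (sqrt (ws ! i \<bullet> ws ! i) * sqrt (ws ! j \<bullet> ws ! j))"
      using i j wi by (simp add: col_W)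
    also have "\<dots> = 1\<^sub>m n $$ (i,j)"
    proof (cases "i = j")
      case True
      have "ws ! i \<bullet> ws ! i \<ge> 0" using conjugate_square_ge_0_vec[of "ws ! i"] by simp
      with orth[OF i i] show ?thesis using True i by simp
    qed (use orth[OF i j] i j in simp)
    finally show "(transpose_mat W * W) $$ (i,j) = 1\<^sub>m n $$ (i,j)" .
  qed (use W in auto)
qed

lemma orthogonal_mat_with_first_col:
  fixes v :: "real vec"
  assumes v: "v \<in> carrier_vec n" and v0: "v \<noteq> 0\<^sub>v n"
  obtains W where "W \<in> carrier_mat n n" "transpose_mat W * W = 1\<^sub>m n"
    "col W 0 = (1 / sqrt (v \<bullet> v)) \<cdot>\<^sub>v v"
proof -
  interpret cof_vec_space n "TYPE(real)" .
  define b where "b = basis_completion v"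
  define ws where "ws = gram_schmidt n b"
  from basis_completion[OF v v0, folded b_def]
  have b: "distinct b" "\<not> lin_dep (set b)" "set b \<subseteq> carrier_vec n" "hd b = v" "length b = n"
    by auto
  have n: "n \<noteq> 0" using v v0 by auto
  then obtain vs where bv: "b = v # vs" using b(4,5) by (cases b) auto
  from gram_schmidt_result[OF b(3,1,2) refl, folded ws_def]
  have ws: "set ws \<subseteq> carrier_vec n" "corthogonal ws" "length ws = n" by (auto simp: b(5))
  have "hd ws = v" using gram_schmidt_hd[OF v, of vs] unfolding ws_def bv .
  hence "ws ! 0 = v" using ws(3) n by (cases ws) auto
  note W = orthogonal_mat_of_normalized_cols[OF ws]
  show ?thesis
    by (rule that[OF W], subst col_mat_of_cols) (use ws n \<open>ws ! 0 = v\<close> in auto)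
qed

lemma symmetric_four_block_if_col0:
  fixes B :: "'a :: comm_ring_1 mat"
  assumes B: "B \<in> carrier_mat (Suc m) (Suc m)" and sym: "transpose_mat B = B"
    and col0: "col B 0 = e \<cdot>\<^sub>v unit_vec (Suc m) 0"
  defines "B' \<equiv> mat m m (\<lambda>(i,j). B $$ (Suc i, Suc j))"
  shows "B = four_block_mat (mat 1 1 (\<lambda>_. e)) (0\<^sub>m 1 m) (0\<^sub>m m 1) B'"
    and "transpose_mat B' = B'"
proof -
  have B_ij: "B $$ (j,i) = B $$ (i,j)" if "i < Suc m" "j < Suc m" for i j
    using sym B that by (metis carrier_matD index_transpose_mat(1))
  have B_i0: "B $$ (i,0) = (if i = 0 then e else 0)" if "i < Suc m" for i
    using arg_cong[OF col0, of "\<lambda>v. v $ i"] B that by (auto simp: unit_vec_def)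
  show "B = four_block_mat (mat 1 1 (\<lambda>_. e)) (0\<^sub>m 1 m) (0\<^sub>m m 1) B'"
  proof (rule eq_matI)
    fix i j assume "i < dim_row (four_block_mat (mat 1 1 (\<lambda>_. e)) (0\<^sub>m 1 m) (0\<^sub>m m 1) B')"
      "j < dim_col (four_block_mat (mat 1 1 (\<lambda>_. e)) (0\<^sub>m 1 m) (0\<^sub>m m 1) B')"
    hence ij: "i < Suc m" "j < Suc m" unfolding B'_def by auto
    consider "j = 0" | "i = 0" "j > 0" | "i > 0" "j > 0" by auto
    then show "B $$ (i,j) = four_block_mat (mat 1 1 (\<lambda>_. e)) (0\<^sub>m 1 m) (0\<^sub>m m 1) B' $$ (i,j)"
      by cases (use ij B_i0 B_ij[of 0 j] in \<open>auto simp: B'_def\<close>)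
  qed (use B in \<open>auto simp: B'_def\<close>)
  show "transpose_mat B' = B'"
    unfolding B'_def by (rule eq_matI) (auto simp: B_ij)
qed

lemma orthogonal_deflation:
  fixes A :: "real mat"
  assumes A: "A \<in> carrier_mat (Suc m) (Suc m)" and sym: "transpose_mat A = A"
    and e: "eigenvalue A e"
  obtains W A' where "W \<in> carrier_mat (Suc m) (Suc m)" "transpose_mat W * W = 1\<^sub>m (Suc m)"
    "A' \<in> carrier_mat m m" "transpose_mat A' = A'"
    "transpose_mat W * A * W = four_block_mat (mat 1 1 (\<lambda>_. e)) (0\<^sub>m 1 m) (0\<^sub>m m 1) A'"
proof -
  obtain v where v: "v \<in> carrier_vec (Suc m)" "v \<noteq> 0\<^sub>v (Suc m)" "A *\<^sub>v v = e \<cdot>\<^sub>v v"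
    using e A unfolding eigenvalue_def eigenvector_def by auto
  obtain W where W: "W \<in> carrier_mat (Suc m) (Suc m)" "transpose_mat W * W = 1\<^sub>m (Suc m)"
    and W0: "col W 0 = (1 / sqrt (v \<bullet> v)) \<cdot>\<^sub>v v"
    using orthogonal_mat_with_first_col[OF v(1,2)] by blast
  define B where "B = transpose_mat W * A * W"
  have B: "B \<in> carrier_mat (Suc m) (Suc m)" unfolding B_def using W A by auto
  have "transpose_mat B = transpose_mat W * transpose_mat A * W"
    unfolding B_def using W A
    by (simp add: transpose_mult[of _ "Suc m" "Suc m" _ "Suc m"] assoc_mult_mat[of _ "Suc m" "Suc m" _ "Suc m" _ "Suc m"])
  hence symB: "transpose_mat B = B" unfolding sym B_def .
  have "A *\<^sub>v col W 0 = e \<cdot>\<^sub>v col W 0"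
    unfolding W0 using v A by (auto simp: mult_mat_vec smult_smult_assoc mult.commute)
  have "col B 0 = (transpose_mat W * A) *\<^sub>v col W 0"
    unfolding B_def by (rule col_mult2) (use W A in auto)
  also have "\<dots> = transpose_mat W *\<^sub>v (A *\<^sub>v col W 0)"
    by (rule assoc_mult_mat_vec) (use W A in \<open>auto simp: carrier_vecI\<close>)
  also have "\<dots> = e \<cdot>\<^sub>v (transpose_mat W *\<^sub>v col W 0)"
    unfolding \<open>A *\<^sub>v col W 0 = e \<cdot>\<^sub>v col W 0\<close> using W by (intro mult_mat_vec) (auto simp: carrier_vecI)
  also have "transpose_mat W *\<^sub>v col W 0 = unit_vec (Suc m) 0"
    using W col_mult2[of "transpose_mat W" "Suc m" "Suc m" W "Suc m" 0] by simp
  finally have "col B 0 = e \<cdot>\<^sub>v unit_vec (Suc m) 0" .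
  from symmetric_four_block_if_col0[OF B symB this] show ?thesis
    by (intro that[OF W]) (auto simp: B_def)
qed

locale orthogonal_diagonalization =
  fixes A U :: "real mat" and es :: "real list" and n :: nat
  assumes A_carrier: "A \<in> carrier_mat n n" and U_carrier: "U \<in> carrier_mat n n"
    and orthogonal: "transpose_mat U * U = 1\<^sub>m n"
    and length_es: "length es = n"
    and decomposition: "A = U * mat_diag n (\<lambda>i. es ! i) * transpose_mat U"

lemma orthogonal_diagonalization_four_block:
  assumes "orthogonal_diagonalization A U es m"
  shows "orthogonal_diagonalization (four_block_mat (mat 1 1 (\<lambda>_. e)) (0\<^sub>m 1 m) (0\<^sub>m m 1) A)
    (four_block_mat (1\<^sub>m 1) (0\<^sub>m 1 m) (0\<^sub>m m 1) U) (e # es) (Suc m)"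
proof -
  interpret orthogonal_diagonalization A U es m by fact
  let ?E = "mat 1 1 (\<lambda>_. e) :: real mat" and ?D = "mat_diag m (\<lambda>i. es ! i)"
  let ?U' = "four_block_mat (1\<^sub>m 1) (0\<^sub>m 1 m) (0\<^sub>m m 1) U"
  have U': "?U' \<in> carrier_mat (Suc m) (Suc m)" using U_carrier by auto
  have U'T: "transpose_mat ?U' = four_block_mat (1\<^sub>m 1) (0\<^sub>m 1 m) (0\<^sub>m m 1) (transpose_mat U)"
    using U_carrier by (subst transpose_four_block_mat) auto
  have D': "mat_diag (Suc m) (\<lambda>i. (e # es) ! i) = four_block_mat ?E (0\<^sub>m 1 m) (0\<^sub>m m 1) ?D"
    by (rule eq_matI) (auto simp: mat_diag_def)
  have "transpose_mat ?U' * ?U' = four_block_mat (1\<^sub>m 1) (0\<^sub>m 1 m) (0\<^sub>m m 1) (transpose_mat U * U)"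
    unfolding U'T using U_carrier by (simp add: mult_block_diag_mat)
  moreover have "?U' * mat_diag (Suc m) (\<lambda>i. (e # es) ! i) * transpose_mat ?U'
      = four_block_mat ?E (0\<^sub>m 1 m) (0\<^sub>m m 1) (U * ?D * transpose_mat U)"
    unfolding U'T D' using U_carrier by (simp add: mult_block_diag_mat)
  ultimately show ?thesis
    using U' A_carrier length_es by unfold_locales (auto simp: orthogonal decomposition[symmetric])
qed

lemma orthogonal_diagonalization_orthogonal_conj:
  assumes diag: "orthogonal_diagonalization (transpose_mat W * A * W) V es n"
    and A: "A \<in> carrier_mat n n" and W: "W \<in> carrier_mat n n" "transpose_mat W * W = 1\<^sub>m n"
  shows "orthogonal_diagonalization A (W * V) es n"
proof -
  interpret orthogonal_diagonalization "transpose_mat W * A * W" V es n by fact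
  let ?D = "mat_diag n (\<lambda>i. es ! i)"
  have WT: "transpose_mat W \<in> carrier_mat n n" using W by auto
  have WWT: "W * transpose_mat W = 1\<^sub>m n" using mat_mult_left_right_inverse[OF WT W(1,2)] .
  have "A = W * (transpose_mat W * A * W) * transpose_mat W"
    using A W WT by (simp add: assoc_mult_mat[of _ n n _ n _ n] WWT flip: assoc_mult_mat[of W n n])
  also have "\<dots> = (W * V) * ?D * transpose_mat (W * V)"
    using W U_carrier
    by (subst decomposition)
      (simp add: transpose_mult[of _ n n _ n] assoc_mult_mat[of _ n n _ n _ n] mult_carrier_mat[of _ n n _ n])
  finally have "A = (W * V) * ?D * transpose_mat (W * V)" .
  moreover have "transpose_mat (W * V) * (W * V) = 1\<^sub>m n"
    using W U_carrier orthogonal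
    by (simp add: transpose_mult[of _ n n _ n] assoc_mult_mat[of _ n n _ n _ n] flip: assoc_mult_mat[of "transpose_mat W" n n])
  ultimately show ?thesis
    using W U_carrier A length_es by unfold_locales auto
qed

theorem real_symmetric_orthogonal_diagonalization:
  fixes A :: "real mat"
  assumes "A \<in> carrier_mat n n" and "transpose_mat A = A"
  shows "\<exists>U es. orthogonal_diagonalization A U es n"
  using assms
proof (induction n arbitrary: A)
  case 0
  have "orthogonal_diagonalization A (1\<^sub>m 0) [] 0"
    using 0 by unfold_locales (auto intro: eq_matI)
  thus ?case by blast
next
  case (Suc m)
  obtain e where "eigenvalue A e" using real_symmetric_has_eigenvalue[OF Suc.prems] by auto
  then obtain W A' where W: "W \<in> carrier_mat (Suc m) (Suc m)" "transpose_mat W * W = 1\<^sub>m (Suc m)"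
    and A': "A' \<in> carrier_mat m m" "transpose_mat A' = A'"
    and block: "transpose_mat W * A * W = four_block_mat (mat 1 1 (\<lambda>_. e)) (0\<^sub>m 1 m) (0\<^sub>m m 1) A'"
    using orthogonal_deflation[OF Suc.prems] by blast
  obtain U es where "orthogonal_diagonalization A' U es m" using Suc.IH[OF A'] by blast
  from orthogonal_diagonalization_four_block[OF this, of e, folded block]
  show ?case using orthogonal_diagonalization_orthogonal_conj Suc.prems(1) W by blast
qed

section \<open>Inertia and quadratic form of an orthogonally diagonalised matrix\<close>

lemma sum_order_roots:
  fixes p :: "'a :: idom poly"
  assumes "p \<noteq> 0"
  shows "(\<Sum>x\<in>{x. P x \<and> poly p x = 0}. Polynomial.order x p) = size (filter_mset P (proots p))"
proof -
  have "set_mset (filter_mset P (proots p)) = {x. P x \<and> poly p x = 0}" using assms by auto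
  thus ?thesis using assms by (simp add: size_multiset_overloaded_eq)
qed

lemma proots_prod_linear: "proots (\<Prod>a\<leftarrow>es. [:- a, 1:]) = mset (es :: 'a :: idom list)"
proof (induction es)
  case (Cons a es)
  have "proots ([:- a, 1:] * (\<Prod>a\<leftarrow>es. [:- a, 1:])) = proots [:- a, 1:] + proots (\<Prod>a\<leftarrow>es. [:- a, 1:])"
    by (rule proots_mult) (auto simp: prod_list_zero_iff)
  moreover have "proots [:- a, 1:] = {#a#}" using proots_linear_factor[of "- a"] by simp
  ultimately show ?case using Cons.IH by simp
qed simp

context orthogonal_diagonalization
begin

lemma orthogonal_right: "U * transpose_mat U = 1\<^sub>m n"
  using mat_mult_left_right_inverse[of "transpose_mat U" n U] U_carrier orthogonal by auto

lemma A_symmetric: "transpose_mat A = A"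
proof -
  have "transpose_mat (mat_diag n (\<lambda>i. es ! i)) = mat_diag n (\<lambda>i. es ! i)"
    by (rule eq_matI) (auto simp: mat_diag_def)
  thus ?thesis
    using U_carrier by (subst (1 2) decomposition)
      (simp add: transpose_mult[of _ n n _ n] mult_carrier_mat[of _ n n _ n] assoc_mult_mat[of _ n n _ n _ n])
qed

lemma uminus_diagonalization: "orthogonal_diagonalization (- A) U (map uminus es) n"
proof
  have neg: "mat_diag n (\<lambda>i. map uminus es ! i) = - mat_diag n (\<lambda>i. es ! i)"
    using length_es by (intro eq_matI) (auto simp: mat_diag_def)
  show "- A = U * mat_diag n (\<lambda>i. map uminus es ! i) * transpose_mat U"
    unfolding neg decomposition using U_carrier
    by (simp add: carrier_matD[OF U_carrier] carrier_matD[OF mat_diag_dim])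
qed (use A_carrier U_carrier orthogonal length_es in auto)

lemma eq_0_if_orthogonal_cols:
  assumes x: "x \<in> carrier_vec n" and orth: "\<And>i. i < n \<Longrightarrow> col U i \<bullet> x = 0"
  shows "x = 0\<^sub>v n"
proof -
  have "transpose_mat U *\<^sub>v x = 0\<^sub>v n"
    using x U_carrier orth by (intro eq_vecI) auto
  hence "U *\<^sub>v (transpose_mat U *\<^sub>v x) = 0\<^sub>v n" using U_carrier by auto
  thus ?thesis using x U_carrier by (simp flip: assoc_mult_mat_vec add: orthogonal_right)
qed

lemma mult_vec_expansion:
  assumes x: "x \<in> carrier_vec n"
  shows "A *\<^sub>v x = U *\<^sub>v vec n (\<lambda>i. es ! i * (col U i \<bullet> x))"
proof -
  have "A *\<^sub>v x = U *\<^sub>v (mat_diag n (\<lambda>i. es ! i) *\<^sub>v (transpose_mat U *\<^sub>v x))"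
    unfolding decomposition using U_carrier x by (simp add: assoc_mult_mat_vec[of _ n n _ n])
  also have "mat_diag n (\<lambda>i. es ! i) *\<^sub>v (transpose_mat U *\<^sub>v x) = vec n (\<lambda>i. es ! i * (col U i \<bullet> x))"
    using U_carrier x by (subst mat_diag_mult_vec) auto
  finally show ?thesis .
qed

lemma quadratic_form:
  assumes x: "x \<in> carrier_vec n"
  shows "x \<bullet> (A *\<^sub>v x) = (\<Sum>i<n. es ! i * (col U i \<bullet> x)\<^sup>2)"
proof -
  let ?w = "vec n (\<lambda>i. es ! i * (col U i \<bullet> x))"
  have "x \<bullet> (A *\<^sub>v x) = (transpose_mat U *\<^sub>v x) \<bullet> ?w"
    using transpose_vec_mult_scalar[OF U_carrier _ x, of ?w] by (simp add: mult_vec_expansion[OF x])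
  also have "\<dots> = (\<Sum>i<n. es ! i * (col U i \<bullet> x)\<^sup>2)"
    using U_carrier x
    by (auto simp: scalar_prod_def lessThan_atLeast0 power2_eq_square mult_ac intro!: sum.cong)
  finally show ?thesis .
qed

lemma orthogonal_col_if_kernel:
  assumes x: "x \<in> carrier_vec n" and Ax: "A *\<^sub>v x = 0\<^sub>v n" and i: "i < n" and e: "es ! i \<noteq> 0"
  shows "col U i \<bullet> x = 0"
proof -
  let ?w = "vec n (\<lambda>i. es ! i * (col U i \<bullet> x))"
  have w: "?w \<in> carrier_vec n" by simp
  have "?w = transpose_mat U *\<^sub>v (U *\<^sub>v ?w)"
    using U_carrier w by (simp flip: assoc_mult_mat_vec add: orthogonal)
  also have "U *\<^sub>v ?w = 0\<^sub>v n" using Ax mult_vec_expansion[OF x] by simp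
  finally have "?w $ i = 0" using U_carrier i by simp
  thus ?thesis using i e by simp
qed

definition eigvecs :: "(real \<Rightarrow> bool) \<Rightarrow> real vec list" where
  "eigvecs P = map (col U) (filter (\<lambda>i. P (es ! i)) [0..<n])"

lemma length_eigvecs: "length (eigvecs P) = length (filter P es)"
proof -
  have "filter P es = map (\<lambda>i. es ! i) (filter (\<lambda>i. P (es ! i)) [0..<n])"
    using filter_map[of P "\<lambda>i. es ! i" "[0..<n]"] length_es map_nth[of es] by (simp add: comp_def)
  thus ?thesis unfolding eigvecs_def by simp
qed

lemma eigvecs_carrier: "set (eigvecs P) \<subseteq> carrier_vec n"
  unfolding eigvecs_def using U_carrier by auto

lemma orthogonal_eigvecsD:
  "\<forall>u\<in>set (eigvecs P). u \<bullet> x = 0 \<Longrightarrow> i < n \<Longrightarrow> P (es ! i) \<Longrightarrow> col U i \<bullet> x = 0"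
  unfolding eigvecs_def by auto

lemma eq_0_if_orthogonal_nonpos_eigvecs:
  assumes x: "x \<in> carrier_vec n" and orth: "\<forall>u\<in>set (eigvecs (\<lambda>e. e \<le> 0)). u \<bullet> x = 0"
    and nonpos: "x \<bullet> (A *\<^sub>v x) \<le> 0"
  shows "x = 0\<^sub>v n"
proof (rule eq_0_if_orthogonal_cols[OF x])
  have terms_nonneg: "0 \<le> es ! j * (col U j \<bullet> x)\<^sup>2" if "j \<in> {..<n}" for j
    using that orthogonal_eigvecsD[OF orth, of j] by (cases "es ! j \<le> 0") auto
  hence "(\<Sum>j<n. es ! j * (col U j \<bullet> x)\<^sup>2) = 0"
    using nonpos sum_nonneg[of "{..<n}"] unfolding quadratic_form[OF x] by (meson order_antisym)
  hence terms_0: "\<forall>j\<in>{..<n}. es ! j * (col U j \<bullet> x)\<^sup>2 = 0"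
    using sum_nonneg_eq_0_iff[of "{..<n}" "\<lambda>j. es ! j * (col U j \<bullet> x)\<^sup>2"] terms_nonneg by simp
  fix i assume i: "i < n"
  show "col U i \<bullet> x = 0"
    using bspec[OF terms_0, of i] orthogonal_eigvecsD[OF orth i] i by (cases "es ! i \<le> 0") auto
qed

lemma quadratic_form_nonpos_if_orthogonal_pos_eigvecs:
  assumes x: "x \<in> carrier_vec n" and orth: "\<forall>u\<in>set (eigvecs (\<lambda>e. 0 < e)). u \<bullet> x = 0"
  shows "x \<bullet> (A *\<^sub>v x) \<le> 0"
  unfolding quadratic_form[OF x]
proof (rule sum_nonpos)
  fix j assume "j \<in> {..<n}"
  thus "es ! j * (col U j \<bullet> x)\<^sup>2 \<le> 0"
    using orthogonal_eigvecsD[OF orth, of j] by (cases "0 < es ! j") (auto simp: mult_nonpos_nonneg)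
qed

lemma eq_0_if_kernel_orthogonal_null_eigvecs:
  assumes x: "x \<in> carrier_vec n" and Ax: "A *\<^sub>v x = 0\<^sub>v n"
    and orth: "\<forall>u\<in>set (eigvecs (\<lambda>e. e = 0)). u \<bullet> x = 0"
  shows "x = 0\<^sub>v n"
proof (rule eq_0_if_orthogonal_cols[OF x])
  fix i assume i: "i < n"
  show "col U i \<bullet> x = 0"
  proof (cases "es ! i = 0")
    case False
    thus ?thesis by (rule orthogonal_col_if_kernel[OF x Ax i])
  qed (use orthogonal_eigvecsD[OF orth i] in simp)
qed

lemma char_poly_eq: "char_poly A = (\<Prod>a\<leftarrow>es. [:- a, 1:])"
proof -
  have "similar_mat_wit A (mat_diag n (\<lambda>i. es ! i)) U (transpose_mat U)"
    using A_carrier U_carrier orthogonal orthogonal_right decomposition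
    unfolding similar_mat_wit_def Let_def by auto
  hence "char_poly A = char_poly (mat_diag n (\<lambda>i. es ! i))"
    by (intro char_poly_similar) (auto simp: similar_mat_def)
  also have "\<dots> = (\<Prod>a\<leftarrow>diag_mat (mat_diag n (\<lambda>i. es ! i)). [:- a, 1:])"
    by (rule char_poly_upper_triangular[OF mat_diag_dim]) (auto simp: mat_diag_def)
  also have "diag_mat (mat_diag n (\<lambda>i. es ! i)) = es"
    using length_es by (intro nth_equalityI) (auto simp: diag_mat_def mat_diag_def)
  finally show ?thesis .
qed

lemma n_pos_eq: "n_pos A = length (filter (\<lambda>e. 0 < e) es)"
  and n_neg_eq: "n_neg A = length (filter (\<lambda>e. e < 0) es)"
  and n_zero_eq: "n_zero A = length (filter (\<lambda>e. e = 0) es)"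
proof -
  have nz: "char_poly A \<noteq> 0" unfolding char_poly_eq by (auto simp: prod_list_zero_iff)
  have proots: "proots (char_poly A) = mset es" unfolding char_poly_eq by (rule proots_prod_linear)
  show "n_pos A = length (filter (\<lambda>e. 0 < e) es)"
    unfolding n_pos_def sum_order_roots[OF nz] proots by (simp flip: mset_filter)
  show "n_neg A = length (filter (\<lambda>e. e < 0) es)"
    unfolding n_neg_def sum_order_roots[OF nz] proots by (simp flip: mset_filter)
  show "n_zero A = length (filter (\<lambda>e. e = 0) es)"
    unfolding n_zero_def count_proots[OF nz, symmetric] proots
    by (simp add: count_mset count_list_eq_length_filter flip: eq_commute[of 0, abs_def])
qed

lemma inertia_sum: "n_pos A + n_neg A + n_zero A = n"
proof -
  have "length (filter (\<lambda>e. 0 < e) xs) + length (filter (\<lambda>e. e < 0) xs)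
      + length (filter (\<lambda>e. e = 0) xs) = length xs" for xs :: "real list"
    by (induction xs) auto
  thus ?thesis using length_es by (simp add: n_pos_eq n_neg_eq n_zero_eq)
qed

lemma length_filter_nonpos: "length (filter (\<lambda>e. e \<le> 0) es) = n - n_pos A"
  using sum_length_filter_compl[of "\<lambda>e. 0 < e" es] length_es by (simp add: n_pos_eq not_less)

lemma n_pos_uminus: "n_pos (- A) = n_neg A"
  using orthogonal_diagonalization.n_pos_eq[OF uminus_diagonalization] by (simp add: n_neg_eq filter_map comp_def)

end

section \<open>Dirichlet energy\<close>

definition dirichlet_energy :: "nat \<Rightarrow> (nat \<Rightarrow> nat \<Rightarrow> real) \<Rightarrow> real vec \<Rightarrow> real" where
  "dirichlet_energy n w x = (\<Sum>i<n. \<Sum>j<n. w i j * (x $ i - x $ j)\<^sup>2)"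

lemma dirichlet_energy_nonneg:
  "(\<And>i j. 0 \<le> w i j) \<Longrightarrow> 0 \<le> dirichlet_energy n w x"
  unfolding dirichlet_energy_def by (intro sum_nonneg) auto

lemma dirichlet_energy_eq_0_iff:
  assumes "\<And>i j. 0 \<le> w i j"
  shows "dirichlet_energy n w x = 0 \<longleftrightarrow> (\<forall>i<n. \<forall>j<n. 0 < w i j \<longrightarrow> x $ i = x $ j)"
proof -
  have terms: "0 \<le> w i j * (x $ i - x $ j)\<^sup>2" for i j using assms by simp
  have "dirichlet_energy n w x = 0 \<longleftrightarrow> (\<forall>i<n. \<forall>j<n. w i j * (x $ i - x $ j)\<^sup>2 = 0)"
    unfolding dirichlet_energy_def using terms
    by (simp add: sum_nonneg_eq_0_iff sum_nonneg Ball_def)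
  also have "\<dots> \<longleftrightarrow> (\<forall>i<n. \<forall>j<n. 0 < w i j \<longrightarrow> x $ i = x $ j)"
    using assms by (auto simp: order_less_le)
  finally show ?thesis .
qed

lemma dirichlet_energy_diff:
  "dirichlet_energy n (\<lambda>i j. v i j - w i j) x = dirichlet_energy n v x - dirichlet_energy n w x"
  unfolding dirichlet_energy_def by (simp add: left_diff_distrib sum_subtractf)

lemma zero_row_sums_quadratic_form:
  fixes L :: "real mat"
  assumes L: "L \<in> carrier_mat n n" and sym: "transpose_mat L = L"
    and rows: "\<And>i. i < n \<Longrightarrow> (\<Sum>j<n. L $$ (i,j)) = 0" and x: "x \<in> carrier_vec n"
  shows "x \<bullet> (L *\<^sub>v x) = - dirichlet_energy n (\<lambda>i j. L $$ (i,j)) x / 2"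
proof -
  have L_ji: "L $$ (j,i) = L $$ (i,j)" if "i < n" "j < n" for i j
    using sym L that by (metis carrier_matD index_transpose_mat(1))
  have "x \<bullet> (L *\<^sub>v x) = (\<Sum>i<n. \<Sum>j<n. L $$ (i,j) * x $ i * x $ j)"
    using x L by (auto simp: scalar_prod_def lessThan_atLeast0 sum_distrib_left mult_ac intro!: sum.cong)
  moreover have "(\<Sum>i<n. \<Sum>j<n. L $$ (i,j) * (x $ i)\<^sup>2) = 0"
    using rows by (simp flip: sum_distrib_right)
  moreover have "(\<Sum>i<n. \<Sum>j<n. L $$ (i,j) * (x $ j)\<^sup>2) = 0"
    using rows by (subst sum.swap) (simp add: L_ji flip: sum_distrib_right)
  ultimately show ?thesis
    unfolding dirichlet_energy_def power2_diff
    by (simp add: algebra_simps sum.distrib sum_subtractf sum_distrib_left)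
qed

section \<open>Connected components\<close>

lemma reach_if_edge: "i < n \<Longrightarrow> j < n \<Longrightarrow> E i j \<Longrightarrow> (i, j) \<in> reach n E"
  unfolding reach_def by auto

lemma eq_if_reach:
  assumes "(i, j) \<in> reach n E" and "\<And>i j. i < n \<Longrightarrow> j < n \<Longrightarrow> E i j \<Longrightarrow> f i = f j"
  shows "f i = f j"
proof -
  have "(i, j) \<in> (Restr {(i, j). E i j} {0..<n})\<^sup>*" using assms(1) unfolding reach_def by auto
  thus ?thesis by induction (use assms(2) in auto)
qed

lemma equiv_reach:
  assumes sym: "\<And>i j. i < n \<Longrightarrow> j < n \<Longrightarrow> E i j \<Longrightarrow> E j i"
  shows "equiv {0..<n} (reach n E)"
proof (rule equivI)
  have "sym (Restr {(i, j). E i j} {0..<n})" by (rule symI) (auto intro: sym)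
  hence "sym ((Restr {(i, j). E i j} {0..<n})\<^sup>*)" by (rule sym_rtrancl)
  moreover have "sym ({0..<n} \<times> {0..<n})" by (rule symI) auto
  ultimately show "sym (reach n E)" unfolding reach_def by (rule sym_Int)
  have "trans ({0..<n} \<times> {0..<n})" by (rule transI) auto
  thus "trans (reach n E)" unfolding reach_def by (intro trans_Int trans_rtrancl)
  show "refl_on {0..<n} (reach n E)" unfolding reach_def refl_on_def by auto
  show "reach n E \<subseteq> {0..<n} \<times> {0..<n}" unfolding reach_def by auto
qed

lemma component_labelling:
  assumes sym: "\<And>i j. i < n \<Longrightarrow> j < n \<Longrightarrow> E i j \<Longrightarrow> E j i"
  obtains f where "\<forall>i<n. f i < num_components n E"
    and "\<forall>t<num_components n E. \<exists>i<n. f i = t"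
    and "\<forall>i<n. \<forall>j<n. f i = f j \<longleftrightarrow> (i, j) \<in> reach n E"
proof -
  let ?R = "reach n E" and ?C = "{0..<n} // reach n E"
  have equiv: "equiv {0..<n} ?R" by (rule equiv_reach[OF sym])
  have "finite ?C" using equiv by (intro finite_quotient) (auto dest: equiv_type)
  then obtain g where g: "bij_betw g ?C {0..<num_components n E}"
    unfolding num_components_def using ex_bij_betw_finite_nat by blast
  define f where "f i = g (?R `` {i})" for i
  have in_quotient: "?R `` {i} \<in> ?C" if "i < n" for i using that by (auto intro: quotientI)
  have "\<forall>i<n. f i < num_components n E"
    using g in_quotient unfolding f_def bij_betw_def by auto
  moreover have "\<exists>i<n. f i = t" if t: "t < num_components n E" for t
  proof -
    obtain X where X: "X \<in> ?C" "t = g X" using g t unfolding bij_betw_def by force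
    obtain i where "X = ?R `` {i}" "i \<in> {0..<n}" using X(1) by (rule quotientE)
    thus ?thesis using X(2) unfolding f_def by auto
  qed
  moreover have "f i = f j \<longleftrightarrow> (i, j) \<in> ?R" if "i < n" "j < n" for i j
  proof -
    have "f i = f j \<longleftrightarrow> ?R `` {i} = ?R `` {j}"
      using g in_quotient that unfolding f_def bij_betw_def inj_on_def by metis
    thus ?thesis using eq_equiv_class_iff[OF equiv] that by simp
  qed
  ultimately show ?thesis using that by blast
qed

lemma component_representatives:
  assumes sym: "\<And>i j. i < n \<Longrightarrow> j < n \<Longrightarrow> E i j \<Longrightarrow> E j i"
  obtains rs where "length rs = num_components n E" and "set rs \<subseteq> {0..<n}"
    and "\<forall>i<n. \<exists>r\<in>set rs. (i, r) \<in> reach n E"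
proof -
  let ?c = "num_components n E"
  obtain f where f: "\<forall>i<n. f i < ?c" "\<forall>t<?c. \<exists>i<n. f i = t"
    "\<forall>i<n. \<forall>j<n. f i = f j \<longleftrightarrow> (i, j) \<in> reach n E"
    by (rule component_labelling[OF sym])
  have "\<forall>t. \<exists>i. t < ?c \<longrightarrow> i < n \<and> f i = t" using f(2) by blast
  then obtain r where r: "\<forall>t. t < ?c \<longrightarrow> r t < n \<and> f (r t) = t" by (rule choice[THEN exE])
  have "\<exists>r'\<in>set (map r [0..<?c]). (i, r') \<in> reach n E" if i: "i < n" for i
  proof (rule bexI)
    have "r (f i) < n" "f (r (f i)) = f i" using r f(1) i by auto
    thus "(i, r (f i)) \<in> reach n E" using f(3)[rule_format, of i "r (f i)"] i by simp
    show "r (f i) \<in> set (map r [0..<?c])" using f(1) i by simp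
  qed
  moreover have "set (map r [0..<?c]) \<subseteq> {0..<n}" using r by auto
  ultimately show ?thesis by (intro that[of "map r [0..<?c]"]) auto
qed

lemma num_components_le_length_separating:
  fixes gs :: "real vec list"
  assumes sym: "\<And>i j. i < n \<Longrightarrow> j < n \<Longrightarrow> E i j \<Longrightarrow> E j i"
    and gs: "set gs \<subseteq> carrier_vec n"
    and separating: "\<And>x. x \<in> carrier_vec n \<Longrightarrow> \<forall>i<n. \<forall>j<n. E i j \<longrightarrow> x $ i = x $ j
      \<Longrightarrow> \<forall>g\<in>set gs. g \<bullet> x = 0 \<Longrightarrow> x = 0\<^sub>v n"
  shows "num_components n E \<le> length gs"
proof -
  let ?c = "num_components n E"
  obtain f where f: "\<forall>i<n. f i < ?c" "\<forall>t<?c. \<exists>i<n. f i = t"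
    "\<forall>i<n. \<forall>j<n. f i = f j \<longleftrightarrow> (i, j) \<in> reach n E"
    by (rule component_labelling[OF sym])
  define B :: "real mat" where "B = mat n ?c (\<lambda>(i, t). if f i = t then 1 else 0)"
  have B: "B \<in> carrier_mat n ?c" unfolding B_def by simp
  have Bv: "B *\<^sub>v y = vec n (\<lambda>i. y $ f i)" if "y \<in> carrier_vec ?c" for y
    using f(1) that unfolding B_def
    by (intro eq_vecI) (auto simp: scalar_prod_def if_distrib[of "\<lambda>a. a * _"] sum.delta cong: if_cong)
  have same_label: "f i = f j" if "i < n" "j < n" "E i j" for i j
    using f(3)[rule_format, of i j] reach_if_edge[of i n j E] that by simp
  show ?thesis
  proof (rule dim_le_length_separating_forms[OF B gs])
    fix y :: "real vec" assume y: "y \<in> carrier_vec ?c" and "\<forall>g\<in>set gs. g \<bullet> (B *\<^sub>v y) = 0"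
    moreover have "\<forall>i<n. \<forall>j<n. E i j \<longrightarrow> (B *\<^sub>v y) $ i = (B *\<^sub>v y) $ j"
      using same_label Bv[OF y] by auto
    ultimately have "B *\<^sub>v y = 0\<^sub>v n" using B by (intro separating) auto
    hence "\<forall>i<n. y $ f i = 0" using Bv[OF y] by (metis index_vec index_zero_vec(1))
    thus "y = 0\<^sub>v ?c" using f(2) y by (intro eq_vecI) auto
  qed
qed

lemma num_components_cong:
  "(\<And>i j. i < n \<Longrightarrow> j < n \<Longrightarrow> E i j = E' i j) \<Longrightarrow> num_components n E = num_components n E'"
  unfolding num_components_def reach_def
  by (rule arg_cong[where f = "\<lambda>R. card ({0..<n} // (R\<^sup>* \<inter> {0..<n} \<times> {0..<n}))"]) auto

section \<open>Weighted Laplacians\<close>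

lemma num_components_uminus:
  assumes "L \<in> carrier_mat n n"
  shows "num_components n (graph_Gpos (- L)) = num_components n (graph_Gneg L)"
    and "num_components n (graph_Gneg (- L)) = num_components n (graph_Gpos L)"
    and "num_components n (graph_G (- L)) = num_components n (graph_G L)"
  using assms by (auto intro!: num_components_cong simp: graph_Gpos_def graph_Gneg_def graph_G_def)

locale laplacian_diagonalization = orthogonal_diagonalization L U es n for L U es n +
  assumes zero_row_sums: "\<And>i. i < n \<Longrightarrow> (\<Sum>j<n. L $$ (i,j)) = 0"
begin

lemma entry_sym: "i < n \<Longrightarrow> j < n \<Longrightarrow> L $$ (j,i) = L $$ (i,j)"
  using A_symmetric A_carrier by (metis carrier_matD index_transpose_mat(1))

lemma graph_sym:
  assumes "i < n" "j < n"
  shows "graph_G L i j \<Longrightarrow> graph_G L j i" and "graph_Gpos L i j \<Longrightarrow> graph_Gpos L j i"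
    and "graph_Gneg L i j \<Longrightarrow> graph_Gneg L j i"
  using entry_sym[OF assms] by (auto simp: graph_G_def graph_Gpos_def graph_Gneg_def)

definition pos_energy :: "real vec \<Rightarrow> real" where
  "pos_energy = dirichlet_energy n (\<lambda>i j. max (L $$ (i,j)) 0)"

definition neg_energy :: "real vec \<Rightarrow> real" where
  "neg_energy = dirichlet_energy n (\<lambda>i j. max (- L $$ (i,j)) 0)"

lemma quadratic_form_energy:
  assumes "x \<in> carrier_vec n"
  shows "x \<bullet> (L *\<^sub>v x) = (neg_energy x - pos_energy x) / 2"
proof -
  have "(\<lambda>i j. L $$ (i,j)) = (\<lambda>i j. max (L $$ (i,j)) 0 - max (- L $$ (i,j)) 0)"
    by (auto simp: max_def fun_eq_iff)
  thus ?thesis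
    using zero_row_sums_quadratic_form[OF A_carrier A_symmetric zero_row_sums assms]
    unfolding pos_energy_def neg_energy_def by (simp add: dirichlet_energy_diff)
qed

lemma pos_energy_nonneg: "0 \<le> pos_energy x"
  unfolding pos_energy_def by (rule dirichlet_energy_nonneg) simp

lemma neg_energy_nonneg: "0 \<le> neg_energy x"
  unfolding neg_energy_def by (rule dirichlet_energy_nonneg) simp

lemma pos_energy_eq_0_iff: "pos_energy x = 0 \<longleftrightarrow> (\<forall>i<n. \<forall>j<n. graph_Gpos L i j \<longrightarrow> x $ i = x $ j)"
proof -
  have "pos_energy x = 0 \<longleftrightarrow> (\<forall>i<n. \<forall>j<n. 0 < L $$ (i,j) \<longrightarrow> x $ i = x $ j)"
    unfolding pos_energy_def by (subst dirichlet_energy_eq_0_iff) auto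
  thus ?thesis unfolding graph_Gpos_def by fastforce
qed

lemma neg_energy_eq_0_iff: "neg_energy x = 0 \<longleftrightarrow> (\<forall>i<n. \<forall>j<n. graph_Gneg L i j \<longrightarrow> x $ i = x $ j)"
proof -
  have "neg_energy x = 0 \<longleftrightarrow> (\<forall>i<n. \<forall>j<n. L $$ (i,j) < 0 \<longrightarrow> x $ i = x $ j)"
    unfolding neg_energy_def by (subst dirichlet_energy_eq_0_iff) auto
  thus ?thesis unfolding graph_Gneg_def by fastforce
qed

lemma mult_vec_eq_0_if_const_on_G:
  assumes x: "x \<in> carrier_vec n" and const: "\<forall>i<n. \<forall>j<n. graph_G L i j \<longrightarrow> x $ i = x $ j"
  shows "L *\<^sub>v x = 0\<^sub>v n"
proof (rule eq_vecI)
  fix i assume "i < dim_vec (0\<^sub>v n :: real vec)"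
  hence i: "i < n" by simp
  have "(L *\<^sub>v x) $ i = (\<Sum>j<n. L $$ (i,j) * x $ j)"
    using A_carrier x i by (simp add: scalar_prod_def lessThan_atLeast0)
  also have "\<dots> = (\<Sum>j<n. L $$ (i,j) * x $ i)"
  proof (rule sum.cong[OF refl])
    fix j assume "j \<in> {..<n}"
    thus "L $$ (i,j) * x $ j = L $$ (i,j) * x $ i"
      using const i by (cases "i = j \<or> L $$ (i,j) = 0") (auto simp: graph_G_def)
  qed
  also have "\<dots> = 0" using zero_row_sums[OF i] by (simp flip: sum_distrib_right)
  finally show "(L *\<^sub>v x) $ i = 0\<^sub>v n $ i" using i by simp
qed (use A_carrier in simp)

lemma num_components_Gneg_le: "num_components n (graph_Gneg L) + n_pos L \<le> n"
proof -
  have "num_components n (graph_Gneg L) \<le> length (eigvecs (\<lambda>e. e \<le> 0))"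
  proof (rule num_components_le_length_separating[OF graph_sym(3) eigvecs_carrier])
    fix x assume x: "x \<in> carrier_vec n"
      and const: "\<forall>i<n. \<forall>j<n. graph_Gneg L i j \<longrightarrow> x $ i = x $ j"
      and orth: "\<forall>g\<in>set (eigvecs (\<lambda>e. e \<le> 0)). g \<bullet> x = 0"
    have "neg_energy x = 0" using const by (simp add: neg_energy_eq_0_iff)
    hence "x \<bullet> (L *\<^sub>v x) \<le> 0" using quadratic_form_energy[OF x] pos_energy_nonneg[of x] by simp
    thus "x = 0\<^sub>v n" by (rule eq_0_if_orthogonal_nonpos_eigvecs[OF x orth])
  qed
  thus ?thesis using inertia_sum by (simp add: length_eigvecs length_filter_nonpos)
qed

lemma const_on_G_if_const_on_Gpos:
  assumes x: "x \<in> carrier_vec n" and const: "\<forall>i<n. \<forall>j<n. graph_Gpos L i j \<longrightarrow> x $ i = x $ j"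
    and nonpos: "x \<bullet> (L *\<^sub>v x) \<le> 0"
  shows "\<forall>i<n. \<forall>j<n. graph_G L i j \<longrightarrow> x $ i = x $ j"
proof (intro allI impI)
  fix i j assume ij: "i < n" "j < n" "graph_G L i j"
  have "pos_energy x = 0" using const by (simp add: pos_energy_eq_0_iff)
  hence "neg_energy x = 0" using nonpos quadratic_form_energy[OF x] neg_energy_nonneg[of x] by simp
  hence neg_const: "\<forall>i<n. \<forall>j<n. graph_Gneg L i j \<longrightarrow> x $ i = x $ j"
    by (simp add: neg_energy_eq_0_iff)
  show "x $ i = x $ j"
  proof (cases "0 < L $$ (i,j)")
    case True
    thus ?thesis using const ij by (simp add: graph_G_def graph_Gpos_def)
  next
    case False
    thus ?thesis using neg_const ij by (simp add: graph_G_def graph_Gneg_def)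
  qed
qed

lemma num_components_Gpos_le: "num_components n (graph_Gpos L) \<le> n_pos L + num_components n (graph_G L)"
proof -
  obtain rs where rs: "length rs = num_components n (graph_G L)" "set rs \<subseteq> {0..<n}"
    "\<forall>i<n. \<exists>r\<in>set rs. (i, r) \<in> reach n (graph_G L)"
    by (rule component_representatives[OF graph_sym(1)])
  let ?gs = "eigvecs (\<lambda>e. 0 < e) @ map (unit_vec n) rs"
  have "num_components n (graph_Gpos L) \<le> length ?gs"
  proof (rule num_components_le_length_separating[OF graph_sym(2)])
    show "set ?gs \<subseteq> carrier_vec n" using eigvecs_carrier by auto
    fix x assume x: "x \<in> carrier_vec n"
      and const: "\<forall>i<n. \<forall>j<n. graph_Gpos L i j \<longrightarrow> x $ i = x $ j"
      and orth: "\<forall>g\<in>set ?gs. g \<bullet> x = 0"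
    have "x \<bullet> (L *\<^sub>v x) \<le> 0"
      by (rule quadratic_form_nonpos_if_orthogonal_pos_eigvecs[OF x]) (use orth in simp)
    with x const have G_const: "\<forall>i<n. \<forall>j<n. graph_G L i j \<longrightarrow> x $ i = x $ j"
      by (rule const_on_G_if_const_on_Gpos)
    have "x $ i = 0" if i: "i < n" for i
    proof -
      obtain r where r: "r \<in> set rs" "(i, r) \<in> reach n (graph_G L)" using rs(3) i by blast
      have "x $ i = x $ r" using eq_if_reach[OF r(2), of "\<lambda>k. x $ k"] G_const by blast
      also have "\<dots> = unit_vec n r \<bullet> x" using r(1) rs(2) x by auto
      also have "\<dots> = 0" using orth r(1) by simp
      finally show ?thesis .
    qed
    thus "x = 0\<^sub>v n" using x by (intro eq_vecI) auto
  qed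
  thus ?thesis using rs(1) by (simp add: length_eigvecs n_pos_eq)
qed

lemma num_components_G_le: "num_components n (graph_G L) \<le> n_zero L"
proof -
  have "num_components n (graph_G L) \<le> length (eigvecs (\<lambda>e. e = 0))"
  proof (rule num_components_le_length_separating[OF graph_sym(1) eigvecs_carrier])
    fix x assume x: "x \<in> carrier_vec n" and "\<forall>i<n. \<forall>j<n. graph_G L i j \<longrightarrow> x $ i = x $ j"
      and "\<forall>g\<in>set (eigvecs (\<lambda>e. e = 0)). g \<bullet> x = 0"
    thus "x = 0\<^sub>v n" using eq_0_if_kernel_orthogonal_null_eigvecs mult_vec_eq_0_if_const_on_G by blast
  qed
  thus ?thesis by (simp add: length_eigvecs n_zero_eq)
qed

lemma uminus_laplacian: "laplacian_diagonalization (- L) U (map uminus es) n"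
proof (rule laplacian_diagonalization.intro[OF uminus_diagonalization], unfold_locales)
  fix i assume i: "i < n"
  have "(\<Sum>j<n. (- L) $$ (i,j)) = - (\<Sum>j<n. L $$ (i,j))"
    using A_carrier i by (simp add: sum_negf)
  thus "(\<Sum>j<n. (- L) $$ (i,j)) = 0" using zero_row_sums[OF i] by simp
qed

end

theorem theorem4p1:
  fixes L :: "real mat" and n :: nat
  assumes "n \<ge> 1"
    and "L \<in> carrier_mat n n"
    and "transpose_mat L = L"
    and "\<forall>i<n. L $$ (i,i) = - (\<Sum>j\<in>{0..<n} - {i}. L $$ (i,j))"
  shows "int (num_components n (graph_Gpos L)) - int (num_components n (graph_G L)) \<le> int (n_pos L)
       \<and> n_pos L \<le> n - num_components n (graph_Gneg L)
       \<and> int (num_components n (graph_Gneg L)) - int (num_components n (graph_G L)) \<le> int (n_neg L)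
       \<and> n_neg L \<le> n - num_components n (graph_Gpos L)
       \<and> num_components n (graph_G L) \<le> n_zero L
       \<and> int (n_zero L) \<le> int n + 2 * int (num_components n (graph_G L))
            - int (num_components n (graph_Gpos L)) - int (num_components n (graph_Gneg L))"
proof -
  have rows: "(\<Sum>j<n. L $$ (i,j)) = 0" if i: "i < n" for i
    using assms(4) i by (simp add: lessThan_atLeast0 sum.remove[of "{0..<n}" i])
  obtain U es where "orthogonal_diagonalization L U es n"
    using real_symmetric_orthogonal_diagonalization[OF assms(2,3)] by blast
  then interpret laplacian_diagonalization L U es n
    using rows by (intro laplacian_diagonalization.intro laplacian_diagonalization_axioms.intro)
  interpret neg: laplacian_diagonalization "- L" U "map uminus es" n by (rule uminus_laplacian)
  note neg_bounds = neg.num_components_Gneg_le neg.num_components_Gpos_le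
  show ?thesis
    using num_components_Gneg_le num_components_Gpos_le num_components_G_le inertia_sum
      neg_bounds[unfolded num_components_uminus[OF A_carrier] n_pos_uminus]
    by linarith
qed

end
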